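(* Let $2\le f_1\le f_2\le\dots\le f_n$ be integers forming a Pinwheel instance whose density $D=\sum_{i=1}^n 1/f_i$ satisfies $D\le 1-3/\sqrt{f_1}$. Then the instance is feasible, i.e., there is an infinite sequence over $\{1,\dots,n\}$ in which, for every $i$, every block of $f_i$ consecutive entries contains at least one occurrence of $i$.
   Context: Pinwheel problem: given integer frequencies $2\le f_1\le\dots\le f_n$, a schedule is an infinite sequence of indices from $\{1,\dots,n\}$ such that for each $i$, any $f_i$ consecutive elements of the sequence include index $i$. The instance is feasible if a schedule exists. Its density is $\sum_i 1/f_i$. *)

theory Defs
  imports Complex_Main
begin

definition pinwheel_schedule :: "nat \<Rightarrow> (nat \<Rightarrow> nat) \<Rightarrow> (nat \<Rightarrow> nat) \<Rightarrow> bool" where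
  "pinwheel_schedule n f s \<longleftrightarrow>
     (\<forall>t. s t \<in> {1..n}) \<and>
     (\<forall>i\<in>{1..n}. \<forall>t. \<exists>k<f i. s (t + k) = i)"

definition pinwheel_feasible :: "nat \<Rightarrow> (nat \<Rightarrow> nat) \<Rightarrow> bool" where
  "pinwheel_feasible n f \<longleftrightarrow> (\<exists>s. pinwheel_schedule n f s)"

definition pinwheel_density :: "nat \<Rightarrow> (nat \<Rightarrow> nat) \<Rightarrow> real" where
  "pinwheel_density n f = (\<Sum>i=1..n. 1 / real (f i))"

end

theory Submission
  imports Defs "HOL-Library.Discrete_Functions"
begin

text \<open>Let \<open>K = \<lfloor>\<surd>f\<^sub>1\<rfloor>\<close>. Cut the tasks, sorted by period, greedily into groups: a group opened by a
  task of period \<open>f\<close> with \<open>K 2\<^sup>j \<le> f < 2K 2\<^sup>j\<close> consists of \<open>c = \<lfloor>f / 2\<^sup>j\<rfloor> \<ge> K\<close> consecutive tasks,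
  which take turns in a single slot of period \<open>2\<^sup>j\<close>; each of them is then served within
  \<open>c 2\<^sup>j \<le> f\<close> steps. The slots have density at most \<open>(1 + 1/K) D + 2K/f\<^sub>1 \<le> 1\<close>, and power-of-two
  periods of density at most \<open>1\<close> are always schedulable: merge two slots of the longest period
  into one slot of half that period, and repeat.\<close>

definition covers :: "('a \<Rightarrow> nat) \<Rightarrow> 'a set \<Rightarrow> (nat \<Rightarrow> 'a) \<Rightarrow> bool" where
  "covers F T s \<longleftrightarrow> (\<forall>i\<in>T. \<forall>t. \<exists>k<F i. s (t + k) = i)"

lemma covers_mono: "covers F T s \<Longrightarrow> (\<And>i. i \<in> T \<Longrightarrow> F i \<le> G i) \<Longrightarrow> covers G T s"
  unfolding covers_def by (meson less_le_trans)

fun occurrences :: "(nat \<Rightarrow> 'a) \<Rightarrow> 'a \<Rightarrow> nat \<Rightarrow> nat" where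
  "occurrences s u 0 = 0"
| "occurrences s u (Suc t) = occurrences s u t + (if s t = u then 1 else 0)"

text \<open>The tasks in the list \<open>g u\<close> take turns in the slots where \<open>s\<close> shows \<open>u\<close>.\<close>
definition round_robin :: "(nat \<Rightarrow> 'b) \<Rightarrow> ('b \<Rightarrow> 'a list) \<Rightarrow> nat \<Rightarrow> 'a" where
  "round_robin s g t = g (s t) ! (occurrences s (s t) t mod length (g (s t)))"

lemma occurrences_mono: "t \<le> t' \<Longrightarrow> occurrences s u t \<le> occurrences s u t'"
  by (induction t' rule: dec_induct) auto

lemma occurrences_add_windows:
  assumes "\<forall>t. \<exists>k<H. s (t + k) = u"
  shows "occurrences s u t + q \<le> occurrences s u (t + q * H)"
proof (induction q)
  case (Suc q)
  obtain k where k: "k < H" "s (t + q * H + k) = u" using assms by blast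
  have "occurrences s u (t + q * H) \<le> occurrences s u (t + q * H + k)"
    by (rule occurrences_mono) simp
  also have "\<dots> < occurrences s u (Suc (t + q * H + k))" using k by simp
  also have "\<dots> \<le> occurrences s u (t + Suc q * H)" by (rule occurrences_mono) (use k in simp)
  finally show ?case using Suc by linarith
qed simp

lemma occurrences_attained:
  assumes "t \<le> t'" "occurrences s u t \<le> v" "v < occurrences s u t'"
  shows "\<exists>x. t \<le> x \<and> x < t' \<and> s x = u \<and> occurrences s u x = v"
  using assms
proof (induction t')
  case (Suc t')
  show ?case
  proof (cases "v < occurrences s u t'")
    case True
    with Suc have "t \<le> t'" by (metis le_SucE not_less)
    with Suc.IH True Suc.prems(2) show ?thesis using less_SucI by blast
  next
    case False
    with Suc.prems have "s t' = u" "occurrences s u t' = v" "t \<le> t'"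
      by (auto split: if_splits simp: le_Suc_eq)
    then show ?thesis by blast
  qed
qed simp

lemma covers_round_robin:
  assumes cov: "\<forall>t. \<exists>k<H. s (t + k) = u" and i: "i \<in> set (g u)"
  shows "\<exists>k<length (g u) * H. round_robin s g (t + k) = i"
proof -
  define L where "L = length (g u)"
  obtain m where m: "m < L" "g u ! m = i" using i by (auto simp: in_set_conv_nth L_def)
  define c where "c = occurrences s u t"
  define v where "v = c + (m + L - c mod L) mod L"
  have "v < c + L" using m by (simp add: v_def)
  have "v mod L = (c + (m + L - c mod L)) mod L" by (simp add: v_def mod_add_right_eq)
  also have "c + (m + L - c mod L) = m + L * (c div L + 1)"
  proof -
    have "c mod L < L" "L * (c div L) + c mod L = c" "L * (c div L + 1) = L * (c div L) + L"
      using m(1) by simp_all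
    then show ?thesis by linarith
  qed
  also have "(m + L * (c div L + 1)) mod L = m" using m(1) by (simp only: mod_mult_self2 mod_less)
  finally have "v mod L = m" .
  have "c + L \<le> occurrences s u (t + L * H)"
    unfolding c_def by (rule occurrences_add_windows [OF cov])
  with \<open>v < c + L\<close> obtain x where x: "t \<le> x" "x < t + L * H" "s x = u" "occurrences s u x = v"
    using occurrences_attained [of t "t + L * H" s u v] by (auto simp: v_def c_def)
  have "round_robin s g (t + (x - t)) = i"
    using x \<open>v mod L = m\<close> m(2) by (simp add: round_robin_def L_def)
  moreover have "x - t < L * H" using x by linarith
  ultimately show ?thesis unfolding L_def by blast
qed

lemma covers_share_slot:
  assumes cov: "covers F T s" and "a \<in> T" "b \<notin> T"
  shows "covers (F(a := 2 * F a, b := 2 * F a)) (insert b T)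
           (round_robin s (\<lambda>x. if x = a then [a, b] else [x]))"
  unfolding covers_def
proof (intro ballI allI)
  fix i t assume i: "i \<in> insert b T"
  let ?g = "\<lambda>x. if x = a then [a, b] else [x]"
  show "\<exists>k<(F(a := 2 * F a, b := 2 * F a)) i. round_robin s ?g (t + k) = i"
  proof (cases "i = a \<or> i = b")
    case True
    have "\<forall>t. \<exists>k<F a. s (t + k) = a" using cov \<open>a \<in> T\<close> by (simp add: covers_def)
    moreover have "(F(a := 2 * F a, b := 2 * F a)) i = length (?g a) * F a"
      using True \<open>a \<in> T\<close> \<open>b \<notin> T\<close> by auto
    ultimately show ?thesis using covers_round_robin [of "F a" s a i ?g] True by auto
  next
    case False
    then have "\<forall>t. \<exists>k<F i. s (t + k) = i" using cov i by (simp add: covers_def)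
    from covers_round_robin [OF this, of i ?g] False show ?thesis by auto
  qed
qed

text \<open>Halving the unique longest period keeps the density at most \<open>1\<close>, since the other
  weights are multiples of \<open>1 / 2^N\<close>.\<close>
lemma dyadic_sum_round_up:
  fixes J :: "'a \<Rightarrow> nat"
  assumes "finite T" "a \<in> T" "J a = Suc N" "\<And>x. x \<in> T - {a} \<Longrightarrow> J x \<le> N"
    and "(\<Sum>u\<in>T. 1 / 2 ^ J u :: real) \<le> 1"
  shows "(\<Sum>u\<in>T. 1 / 2 ^ (J(a := N)) u :: real) \<le> 1"
proof -
  define \<sigma> where "\<sigma> = (\<Sum>x\<in>T - {a}. (2::nat) ^ (N - J x))"
  have "1 / 2 ^ J x = (2::real) ^ (N - J x) / 2 ^ N" if "x \<in> T - {a}" for x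
    using assms(4) [OF that] by (simp add: power_diff)
  then have rest: "(\<Sum>u\<in>T - {a}. 1 / 2 ^ J u :: real) = real \<sigma> / 2 ^ N"
    unfolding \<sigma>_def by (simp add: sum_divide_distrib)
  have split: "(\<Sum>u\<in>T. h u) = h a + (\<Sum>u\<in>T - {a}. h u)" for h :: "'a \<Rightarrow> real"
    using assms(1,2) by (rule sum.remove)
  have "1 / (2 * 2 ^ N) + real \<sigma> / 2 ^ N \<le> (1::real)"
    using assms(3,5) rest split [of "\<lambda>u. 1 / 2 ^ J u"] by simp
  then have "real (1 + 2 * \<sigma>) \<le> real (2 * 2 ^ N)"
    by (simp add: field_simps)
  then have "\<sigma> + 1 \<le> 2 ^ N"
    by (simp only: of_nat_le_iff)
  then have "real (\<sigma> + 1) \<le> real (2 ^ N)"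
    by (simp only: of_nat_le_iff)
  then have "real \<sigma> + 1 \<le> 2 ^ N"
    by simp
  then have "1 / 2 ^ N + real \<sigma> / 2 ^ N \<le> (1::real)"
    by (simp add: field_simps)
  moreover have "(\<Sum>u\<in>T - {a}. 1 / 2 ^ (J(a := N)) u :: real) = real \<sigma> / 2 ^ N"
    using rest by simp
  ultimately show ?thesis using split [of "\<lambda>u. 1 / 2 ^ (J(a := N)) u"] by simp
qed

lemma dyadic_sum_merge:
  fixes J :: "'a \<Rightarrow> nat"
  assumes "finite T" "a \<in> T" "b \<in> T" "a \<noteq> b" "J a = Suc N" "J b = Suc N"
  shows "(\<Sum>u\<in>T - {b}. 1 / 2 ^ (J(a := N)) u :: real) = (\<Sum>u\<in>T. 1 / 2 ^ J u)"
proof -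
  let ?h = "\<lambda>u. 1 / 2 ^ J u :: real"
  let ?R = "T - {a} - {b}"
  have fin: "finite (T - {a})" "b \<in> T - {a}" "finite (T - {b})" "a \<in> T - {b}"
    and R: "T - {b} - {a} = ?R" using assms by auto
  have "(\<Sum>u\<in>T. ?h u) = ?h a + ?h b + (\<Sum>u\<in>?R. ?h u)"
    using sum.remove [OF assms(1,2), of ?h] sum.remove [OF fin(1,2), of ?h] by simp
  moreover have "(\<Sum>u\<in>T - {b}. 1 / 2 ^ (J(a := N)) u :: real) = 1 / 2 ^ N + (\<Sum>u\<in>?R. ?h u)"
    using sum.remove [OF fin(3,4), of "\<lambda>u. 1 / 2 ^ (J(a := N)) u :: real"] R by simp
  ultimately show ?thesis using assms(5,6) by simp
qed

text \<open>Induction on \<open>\<Sum> J\<close>: two tasks of the longest period share one slot of half that period,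
  and a unique task of the longest period gets its period halved.\<close>
theorem covers_dyadic:
  fixes J :: "'a \<Rightarrow> nat"
  assumes "finite T" "(\<Sum>u\<in>T. 1 / 2 ^ J u :: real) \<le> 1"
  shows "\<exists>s. covers (\<lambda>u. 2 ^ J u) T s"
  using assms
proof (induction "sum J T" arbitrary: T J rule: less_induct)
  case less
  show ?case
  proof (cases "T = {}")
    case True
    then show ?thesis by (auto simp: covers_def)
  next
    case False
    define M where "M = Max (J ` T)"
    have "M \<in> J ` T" unfolding M_def using less.prems(1) False by (intro Max_in) auto
    then obtain a where a: "a \<in> T" "J a = M" by auto
    have J_le: "J x \<le> M" if "x \<in> T" for x
      using less.prems(1) that unfolding M_def by simp
    show ?thesis
    proof (cases M)
      case 0
      then have "(\<Sum>u\<in>T. 1 / 2 ^ J u :: real) = real (card T)"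
        using J_le by simp
      with less.prems have "T = {a}"
        using a(1) card_le_Suc0_iff_eq [OF less.prems(1)] by auto
      then have "covers (\<lambda>u. 2 ^ J u) T (\<lambda>_. a)" by (auto simp: covers_def intro: exI [of _ 0])
      then show ?thesis by blast
    next
      case (Suc N)
      define J' where "J' = J(a := N)"
      show ?thesis
      proof (cases "\<exists>b\<in>T - {a}. J b = M")
        case True
        then obtain b where b: "b \<in> T" "b \<noteq> a" "J b = M" by blast
        define T' where "T' = T - {b}"
        have T': "finite T'" "a \<in> T'" "b \<notin> T'" "T = insert b T'"
          using less.prems(1) a b unfolding T'_def by auto
        have "sum J' T' < sum J T"
          using sum.remove [OF T'(1,2), of J'] sum.remove [OF T'(1,2), of J]
            sum.insert [OF T'(1,3), of J] T'(4) a b Suc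
          by (simp add: J'_def sum.cong [of "T' - {a}" _ "J(a := N)" J])
        have "(\<Sum>u\<in>T'. 1 / 2 ^ J' u :: real) = (\<Sum>u\<in>T. 1 / 2 ^ J u)"
          unfolding J'_def T'_def using less.prems(1) a b Suc by (intro dyadic_sum_merge) auto
        with less.hyps [OF \<open>sum J' T' < sum J T\<close> T'(1)] less.prems(2)
        obtain s where "covers (\<lambda>u. 2 ^ J' u) T' s" by auto
        from covers_share_slot [OF this T'(2,3)]
        have "covers (\<lambda>u. 2 ^ J u) (insert b T') (round_robin s (\<lambda>x. if x = a then [a, b] else [x]))"
          by (rule covers_mono) (use a b Suc in \<open>auto simp: J'_def\<close>)
        then show ?thesis using T'(4) by blast
      next
        case False
        have "(\<Sum>u\<in>T. 1 / 2 ^ J' u :: real) \<le> 1"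
          unfolding J'_def
        proof (rule dyadic_sum_round_up [OF less.prems(1) a(1)])
          show "J x \<le> N" if "x \<in> T - {a}" for x
            using J_le [of x] False that Suc by (auto simp: le_Suc_eq)
        qed (use a Suc less.prems(2) in auto)
        moreover have "sum J' T < sum J T"
          using sum.remove [OF less.prems(1) a(1), of J'] sum.remove [OF less.prems(1) a(1), of J] a Suc
          by (simp add: J'_def)
        ultimately obtain s where "covers (\<lambda>u. 2 ^ J' u) T s"
          using less.hyps less.prems(1) by blast
        then have "covers (\<lambda>u. 2 ^ J u) T s"
          by (rule covers_mono) (simp add: J'_def a Suc)
        then show ?thesis by blast
      qed
    qed
  qed
qed

definition level :: "nat \<Rightarrow> nat \<Rightarrow> nat" where
  "level K v = floor_log (v div K)"

definition group_size :: "nat \<Rightarrow> nat \<Rightarrow> nat" where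
  "group_size K v = v div 2 ^ level K v"

lemma level_bounds:
  assumes "0 < K" "K \<le> v"
  shows "K * 2 ^ level K v \<le> v" "v < 2 * K * 2 ^ level K v"
proof -
  have "0 < v div K" using assms by (simp add: div_greater_zero_iff)
  then have "2 ^ level K v \<le> v div K" unfolding level_def by (rule floor_log_exp2_le)
  then have "K * 2 ^ level K v \<le> K * (v div K)" by simp
  also have "\<dots> \<le> v" by simp
  finally show "K * 2 ^ level K v \<le> v" .
  have "v < K * (v div K + 1)" using assms(1) dividend_less_times_div [of K v] by simp
  also have "\<dots> \<le> K * (2 * 2 ^ level K v)"
    using floor_log_exp2_gt [of "v div K"] unfolding level_def by (intro mult_left_mono) auto
  finally show "v < 2 * K * 2 ^ level K v" by simp
qed

lemma group_size_bounds:
  assumes "0 < K" "K \<le> v"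
  shows "K \<le> group_size K v" "group_size K v * 2 ^ level K v \<le> v"
    "v < (group_size K v + 1) * 2 ^ level K v"
proof -
  show "K \<le> group_size K v"
    unfolding group_size_def using level_bounds(1) [OF assms]
    by (simp add: less_eq_div_iff_mult_less_eq)
  show "group_size K v * 2 ^ level K v \<le> v" unfolding group_size_def by simp
  show "v < (group_size K v + 1) * 2 ^ level K v"
    unfolding group_size_def using dividend_less_div_times [of "2 ^ level K v" v] by simp
qed

fun groups :: "nat \<Rightarrow> ('a \<Rightarrow> nat) \<Rightarrow> 'a list \<Rightarrow> (nat \<times> 'a list) list" where
  "groups K f [] = []"
| "groups K f (a # xs) =
     (level K (f a), a # take (group_size K (f a) - 1) xs)
       # groups K f (drop (group_size K (f a) - 1) xs)"

lemma concat_groups: "concat (map snd (groups K f xs)) = xs"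
  by (induction K f xs rule: groups.induct) auto

lemma groups_period_le:
  assumes "0 < K" "\<forall>x\<in>set xs. K \<le> f x" "sorted (map f xs)"
    and "p \<in> set (groups K f xs)" "i \<in> set (snd p)"
  shows "length (snd p) * 2 ^ fst p \<le> f i"
  using assms
proof (induction K f xs rule: groups.induct)
  case (2 K f a xs)
  let ?c = "group_size K (f a)"
  show ?case
  proof (cases "p = (level K (f a), a # take (?c - 1) xs)")
    case True
    have "length (snd p) \<le> ?c" using True group_size_bounds(1) [of K "f a"] 2(2,3) by auto
    moreover have "?c * 2 ^ fst p \<le> f a" using True group_size_bounds(2) [of K "f a"] 2(2,3) by simp
    moreover have "f a \<le> f i" using True 2(4,6) by (auto dest: in_set_takeD)
    ultimately show ?thesis by (meson le_trans mult_le_mono1)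
  next
    case False
    with 2 show ?thesis by (auto simp: drop_map [symmetric] sorted_wrt_drop dest: in_set_dropD)
  qed
qed simp

lemma group_step_ineq:
  fixes F F' P c K Dg :: real
  assumes "1 \<le> K" "K \<le> c" "0 < F" "F \<le> F'" "0 < P" "F < (c + 1) * P" "F < 2 * K * P"
    and "c / F' \<le> Dg"
  shows "1 / P + 2 * K / F' \<le> (1 + 1 / K) * Dg + 2 * K / F"
proof -
  have "(c + 1) / F' \<le> (1 + 1 / K) * (c / F')"
  proof -
    have "c + 1 \<le> (1 + 1 / K) * c" using assms(1,2) by (simp add: field_simps)
    then show ?thesis using assms(3,4) by (simp add: divide_right_mono)
  qed
  also have "\<dots> \<le> (1 + 1 / K) * Dg" using assms(1,8) by (intro mult_left_mono) auto
  finally have "(c + 1) / F' \<le> (1 + 1 / K) * Dg" .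
  moreover have "1 / P + 2 * K / F' \<le> (c + 1) / F' + 2 * K / F"
  proof -
    define x where "x = F / P"
    have "x < c + 1" "x < 2 * K" using assms unfolding x_def by (simp_all add: pos_divide_less_eq)
    then have "0 \<le> (c + 1 - x) * F + (2 * K - x) * (F' - F)"
      using assms(3,4) by (intro add_nonneg_nonneg mult_nonneg_nonneg) auto
    then have "x * F' + 2 * K * F \<le> (c + 1) * F + 2 * K * F'" by (simp add: algebra_simps)
    then have "(x * F' + 2 * K * F) / (F * F') \<le> ((c + 1) * F + 2 * K * F') / (F * F')"
      using assms(3,4) by (intro divide_right_mono) auto
    moreover have "1 / P = x / F" using assms(3,5) unfolding x_def by simp
    ultimately show ?thesis using assms(3,4) by (simp add: add_divide_distrib)
  qed
  ultimately show ?thesis by linarith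
qed

text \<open>Each group contributes at most \<open>(1 + 1/K)\<close> times its density, up to a telescoping error
  term \<open>2 K / f a\<close> attached to the first task \<open>a\<close> of the remaining list.\<close>
lemma groups_density:
  assumes "0 < K" "\<forall>x\<in>set xs. K \<le> f x" "sorted (map f xs)" "xs \<noteq> []"
  shows "(\<Sum>p\<leftarrow>groups K f xs. 1 / 2 ^ fst p) \<le>
           (1 + 1 / K) * (\<Sum>i\<leftarrow>xs. 1 / f i) + 2 * K / f (hd xs)"
  using assms
proof (induction K f xs rule: groups.induct)
  case (2 K f a xs)
  define c where "c = group_size K (f a)"
  define j where "j = level K (f a)"
  define g where "g = a # take (c - 1) xs"
  define ys where "ys = drop (c - 1) xs"
  define Dg where "Dg = (\<Sum>i\<leftarrow>g. 1 / real (f i))"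
  define Dy where "Dy = (\<Sum>i\<leftarrow>ys. 1 / real (f i))"
  have Ka: "K \<le> f a" using 2(3) by simp
  have "real (f a) < real ((c + 1) * 2 ^ j)" "real (f a) < real (2 * K * 2 ^ j)"
    using group_size_bounds(3) level_bounds(2) 2(2) Ka unfolding c_def j_def by (simp_all only: of_nat_less_iff)
  then have fa_less: "real (f a) < (real c + 1) * 2 ^ j" "real (f a) < 2 * real K * 2 ^ j"
    by (simp_all add: distrib_right)
  have fa_pos: "0 < real (f a)" using 2(2) Ka by simp
  have "a # xs = g @ ys" by (simp add: g_def ys_def)
  then have density_split: "(\<Sum>i\<leftarrow>a # xs. 1 / real (f i)) = Dg + Dy"
    unfolding Dg_def Dy_def by simp
  have groups_eq: "groups K f (a # xs) = (j, g) # groups K f ys"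
    by (simp add: c_def j_def g_def ys_def)
  have "Dg \<ge> 0" unfolding Dg_def by (intro sum_list_nonneg) auto
  have "Dy \<ge> 0" unfolding Dy_def by (intro sum_list_nonneg) auto
  show ?case
  proof (cases "ys = []")
    case True
    have "1 / 2 ^ j \<le> 2 * real K / real (f a)"
      using fa_less(2) fa_pos by (simp add: field_simps)
    moreover have "0 \<le> (1 + 1 / real K) * (Dg + Dy)" using \<open>Dg \<ge> 0\<close> \<open>Dy \<ge> 0\<close> by simp
    ultimately show ?thesis unfolding groups_eq density_split True by simp
  next
    case False
    have sorted_ys: "sorted (map f ys)"
      using 2(4) by (simp add: ys_def drop_map [symmetric] sorted_wrt_drop)
    have "\<forall>x\<in>set ys. K \<le> f x" using 2(3) by (auto simp: ys_def dest: in_set_dropD)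
    from "2.IH" [OF 2(2), folded c_def, folded ys_def, OF this sorted_ys False]
    have IH: "(\<Sum>p\<leftarrow>groups K f ys. 1 / 2 ^ fst p) \<le> (1 + 1 / K) * Dy + 2 * K / f (hd ys)"
      unfolding Dy_def by simp
    have f_le_hd: "f i \<le> f (hd ys)" if "i \<in> set g" for i
      using 2(4) False that \<open>a # xs = g @ ys\<close> by (auto simp: sorted_append)
    have "length g = c"
      using False group_size_bounds(1) [OF 2(2) Ka] 2(2) unfolding g_def ys_def c_def by simp
    moreover have "1 / real (f (hd ys)) \<le> 1 / real (f i)" if "i \<in> set g" for i
    proof -
      have "K \<le> f i" using 2(3) that \<open>a # xs = g @ ys\<close> by (metis Un_iff set_append)
      with f_le_hd [OF that] 2(2) show ?thesis by (intro divide_left_mono) auto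
    qed
    ultimately have "real c * (1 / real (f (hd ys))) \<le> Dg"
      unfolding Dg_def using sum_list_mono [of g "\<lambda>_. 1 / real (f (hd ys))"]
      by (simp add: sum_list_triv)
    then have "1 / 2 ^ j + 2 * K / f (hd ys) \<le> (1 + 1 / K) * Dg + 2 * K / f a"
      using group_step_ineq [of K c "f a" "f (hd ys)" "2 ^ j" Dg] 2(2) fa_pos fa_less f_le_hd [of a]
        group_size_bounds(1) [OF 2(2) Ka]
      by (simp add: c_def g_def)
    with IH show ?thesis
      unfolding groups_eq density_split by (simp add: distrib_left)
  qed
qed simp

lemma covers_groups:
  assumes "(\<Sum>p\<leftarrow>G. 1 / 2 ^ fst p :: real) \<le> 1"
    and "\<And>p i. p \<in> set G \<Longrightarrow> i \<in> set (snd p) \<Longrightarrow> length (snd p) * 2 ^ fst p \<le> F i"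
  shows "\<exists>s. covers F (set (concat (map snd G))) s"
proof -
  have "(\<Sum>u\<in>{..<length G}. 1 / 2 ^ fst (G ! u) :: real) \<le> 1"
    using assms(1) by (simp add: sum_list_sum_nth atLeast0LessThan)
  then obtain s where s: "covers (\<lambda>u. 2 ^ fst (G ! u)) {..<length G} s"
    using covers_dyadic [of "{..<length G}" "\<lambda>u. fst (G ! u)"] by auto
  have "covers F (set (concat (map snd G))) (round_robin s (\<lambda>u. snd (G ! u)))"
    unfolding covers_def
  proof (intro ballI allI)
    fix i t assume "i \<in> set (concat (map snd G))"
    then obtain p where "p \<in> set G" "i \<in> set (snd p)" by auto
    then obtain u where u: "u < length G" "i \<in> set (snd (G ! u))"
      by (auto simp: in_set_conv_nth)
    with s have "\<forall>t. \<exists>k<2 ^ fst (G ! u). s (t + k) = u" by (simp add: covers_def)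
    from covers_round_robin [of _ s u i "\<lambda>u. snd (G ! u)", OF this u(2)] assms(2) [OF nth_mem [OF u(1)] u(2)]
    show "\<exists>k<F i. round_robin s (\<lambda>u. snd (G ! u)) (t + k) = i"
      using less_le_trans by blast
  qed
  then show ?thesis by blast
qed

lemma pinwheel_feasible_if_covers:
  assumes "1 \<le> n" "covers f {1..n} s"
  shows "pinwheel_feasible n f"
proof -
  define s' where "s' t = (if s t \<in> {1..n} then s t else 1)" for t
  have "pinwheel_schedule n f s'"
    using assms unfolding pinwheel_schedule_def covers_def s'_def by fastforce
  then show ?thesis unfolding pinwheel_feasible_def by blast
qed

text \<open>The key estimate is \<open>1/k + 2k/r\<^sup>2 \<le> 3/r\<close>, i.e. \<open>(r - k)(2k - r) \<ge> 0\<close>.\<close>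
lemma density_threshold_ineq:
  fixes r k D :: real
  assumes "1 \<le> k" "k \<le> r" "r < k + 1" "D \<le> 1 - 3 / r"
  shows "(1 + 1 / k) * D + 2 * k / r\<^sup>2 \<le> 1"
proof -
  have "0 \<le> 3 / r" using assms(1,2) by simp
  with assms(4) have "D \<le> 1" by linarith
  then have "(1 + 1 / k) * D \<le> D + 1 / k"
    using assms(1) by (simp add: distrib_right divide_right_mono)
  moreover have "1 / k + 2 * k / r\<^sup>2 \<le> 3 / r"
  proof -
    have "0 \<le> (r - k) * (2 * k - r)" using assms by (intro mult_nonneg_nonneg) auto
    then have "(r\<^sup>2 + 2 * k\<^sup>2) / (k * r\<^sup>2) \<le> (3 * r * k) / (k * r\<^sup>2)"
      using assms(1,2) by (intro divide_right_mono) (auto simp: algebra_simps power2_eq_square)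
    then show ?thesis using assms(1,2) by (simp add: field_simps power2_eq_square)
  qed
  ultimately show ?thesis using assms(4) by linarith
qed

lemma floor_sqrt_le_sqrt: "real (floor_sqrt m) \<le> sqrt (real m)"
  by (rule real_le_rsqrt) (simp flip: of_nat_power)

lemma sqrt_less_floor_sqrt_plus_1: "sqrt (real m) < real (floor_sqrt m) + 1"
proof (rule real_less_lsqrt)
  have "real m < real ((Suc (floor_sqrt m))\<^sup>2)"
    by (simp only: of_nat_less_iff Suc_floor_sqrt_power2_gt)
  then show "real m < (real (floor_sqrt m) + 1)\<^sup>2" by (simp add: add.commute)
qed simp

theorem mainTheorem2:
  fixes n :: nat and f :: "nat \<Rightarrow> nat"
  assumes "n \<ge> 1"
    and "\<And>i. i \<in> {1..n} \<Longrightarrow> 2 \<le> f i"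
    and "\<And>i j. i \<in> {1..n} \<Longrightarrow> j \<in> {1..n} \<Longrightarrow> i \<le> j \<Longrightarrow> f i \<le> f j"
    and "pinwheel_density n f \<le> 1 - 3 / sqrt (real (f 1))"
  shows "pinwheel_feasible n f"
proof -
  define K where "K = floor_sqrt (f 1)"
  define xs where "xs = [1..<Suc n]"
  have "1 \<le> K" using assms(1) assms(2) [of 1] by (simp add: K_def le_floor_sqrt_iff)
  have K_le: "\<forall>x\<in>set xs. K \<le> f x"
    using assms(1,3) le_trans [OF floor_sqrt_le] by (fastforce simp: xs_def K_def)
  have sorted: "sorted (map f xs)"
    unfolding xs_def sorted_wrt_map by (rule sorted_wrt_mono_rel [OF _ sorted_wrt_upt]) (use assms(3) in auto)
  have density: "(\<Sum>i\<leftarrow>xs. 1 / real (f i)) = pinwheel_density n f"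
    unfolding xs_def pinwheel_density_def
    by (simp only: sum_set_upt_conv_sum_list_nat [symmetric] set_upt atLeastLessThanSuc_atLeastAtMost)
  have "hd xs = 1" "xs \<noteq> []" using assms(1) by (simp_all add: xs_def upt_rec)
  then have "(\<Sum>p\<leftarrow>groups K f xs. 1 / 2 ^ fst p) \<le> (1 + 1 / K) * pinwheel_density n f + 2 * K / f 1"
    using groups_density [OF _ K_le sorted] \<open>1 \<le> K\<close> by (simp add: density)
  also have "\<dots> \<le> 1"
    using density_threshold_ineq [OF _ floor_sqrt_le_sqrt sqrt_less_floor_sqrt_plus_1 assms(4)]
      \<open>1 \<le> K\<close> by (simp add: K_def)
  finally have "(\<Sum>p\<leftarrow>groups K f xs. 1 / 2 ^ fst p :: real) \<le> 1" .
  then obtain s where "covers f (set xs) s"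
    using covers_groups [of "groups K f xs" f] groups_period_le [OF _ K_le sorted] \<open>1 \<le> K\<close>
    by (auto simp: concat_groups)
  moreover have "set xs = {1..n}" by (simp only: xs_def set_upt atLeastLessThanSuc_atLeastAtMost)
  ultimately show ?thesis using pinwheel_feasible_if_covers [OF assms(1)] by simp
qed

end
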